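(* Let $R$ be a commutative noetherian ring, let $\mathfrak a$ be an ideal of $R$, let $\mathcal S_1$ be a Serre subcategory of $R$-modules and let $\mathcal S_2$ be any subcategory of $R$-modules containing the zero module. If $\mathcal S_1\mathcal S_2$ is closed under extensions and $(\mathcal S_2\mathcal S_1)_{\mathfrak a}$ is closed under quotients, then $(\mathcal S_2\mathcal S_1)_{\mathfrak a}\subseteq(\mathcal S_1\mathcal S_2)_{\mathfrak a}$. In particular, if $\mathcal S_2\mathcal S_1$ satisfies the condition $C_{\mathfrak a}$, then so does $\mathcal S_1\mathcal S_2$.
   Context: A Serre subcategory is a full subcategory of $R$-modules closed under submodules, quotients and extensions. For subcategories $\mathcal S,\mathcal T$, the extension subcategory $\mathcal S\mathcal T$ consists of all modules $M$ admitting an exact sequence $0\to L\to M\to N\to 0$ with $L\in\mathcal S$, $N\in\mathcal T$; $\mathcal S$ is closed under extensions if $\mathcal S\mathcal S=\mathcal S$. For a subcategory $\mathcal S$ and module $M$, $\mathcal S$ satisfies the condition $C_{\mathfrak a}$ on $M$ if: $\Gamma_{\mathfrak a}(M)=M$ and $(0:_M\mathfrak a)\in\mathcal S$ imply $M\in\mathcal S$. $\mathcal S_{\mathfrak a}$ denotes the largest subcategory of modules on all of whose objects $\mathcal S$ satisfies the condition $C_{\mathfrak a}$ (i.e. the class of all modules $M$ on which $\mathcal S$ satisfies $C_{\mathfrak a}$). $\mathcal S$ satisfies the condition $C_{\mathfrak a}$ if $\mathcal S_{\mathfrak a}$ is the whole category of $R$-modules. *)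

theory Defs
  imports "HOL-Algebra.Module" "HOL-Algebra.Ideal_Product" "HOL-Algebra.Ring_Divisibility"
begin

text \<open>R-modules are HOL-Algebra modules whose carriers live in a fixed (arbitrary) type 'm.
  A "subcategory" is a predicate on such modules.\<close>

type_synonym ('r, 'm) modclass = "('r, 'm) module \<Rightarrow> bool"

definition mod_hom :: "'r ring \<Rightarrow> ('r, 'm) module \<Rightarrow> ('r, 'n) module \<Rightarrow> ('m \<Rightarrow> 'n) \<Rightarrow> bool" where
  "mod_hom R M N f \<longleftrightarrow>
     f \<in> carrier M \<rightarrow> carrier N \<and>
     (\<forall>x\<in>carrier M. \<forall>y\<in>carrier M. f (x \<oplus>\<^bsub>M\<^esub> y) = f x \<oplus>\<^bsub>N\<^esub> f y) \<and>
     (\<forall>r\<in>carrier R. \<forall>x\<in>carrier M. f (r \<odot>\<^bsub>M\<^esub> x) = r \<odot>\<^bsub>N\<^esub> f x)"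

definition subcat :: "'r ring \<Rightarrow> ('r, 'm) modclass \<Rightarrow> bool" where
  "subcat R S \<longleftrightarrow> (\<forall>M. S M \<longrightarrow> module R M)"

definition iso_closed :: "'r ring \<Rightarrow> ('r, 'm) modclass \<Rightarrow> bool" where
  "iso_closed R S \<longleftrightarrow> (\<forall>M N f. module R M \<and> module R N \<and> mod_hom R M N f \<and>
      bij_betw f (carrier M) (carrier N) \<and> S M \<longrightarrow> S N)"

definition closed_sub :: "'r ring \<Rightarrow> ('r, 'm) modclass \<Rightarrow> bool" where
  "closed_sub R S \<longleftrightarrow> (\<forall>M N f. module R M \<and> module R N \<and> mod_hom R N M f \<and>
      inj_on f (carrier N) \<and> S M \<longrightarrow> S N)"

definition closed_quot :: "'r ring \<Rightarrow> ('r, 'm) modclass \<Rightarrow> bool" where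
  "closed_quot R S \<longleftrightarrow> (\<forall>M N g. module R M \<and> module R N \<and> mod_hom R M N g \<and>
      g ` carrier M = carrier N \<and> S M \<longrightarrow> S N)"

definition ext_cat :: "'r ring \<Rightarrow> ('r, 'm) modclass \<Rightarrow> ('r, 'm) modclass \<Rightarrow> ('r, 'm) modclass" where
  "ext_cat R S T M \<longleftrightarrow> module R M \<and>
     (\<exists>L N f g. module R L \<and> module R N \<and> mod_hom R L M f \<and> inj_on f (carrier L) \<and>
        mod_hom R M N g \<and> g ` carrier M = carrier N \<and>
        f ` carrier L = {x \<in> carrier M. g x = \<zero>\<^bsub>N\<^esub>} \<and> S L \<and> T N)"

definition closed_ext :: "'r ring \<Rightarrow> ('r, 'm) modclass \<Rightarrow> bool" where
  "closed_ext R S \<longleftrightarrow> ext_cat R S S = S"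

definition serre :: "'r ring \<Rightarrow> ('r, 'm) modclass \<Rightarrow> bool" where
  "serre R S \<longleftrightarrow> subcat R S \<and> closed_sub R S \<and> closed_quot R S \<and> closed_ext R S"

definition contains_zero :: "'r ring \<Rightarrow> ('r, 'm) modclass \<Rightarrow> bool" where
  "contains_zero R S \<longleftrightarrow> (\<forall>M. module R M \<and> carrier M = {\<zero>\<^bsub>M\<^esub>} \<longrightarrow> S M)"

definition ideal_pow :: "'r ring \<Rightarrow> 'r set \<Rightarrow> nat \<Rightarrow> 'r set" where
  "ideal_pow R a n = ((\<lambda>J. ideal_prod R a J) ^^ n) (carrier R)"

definition torsion :: "'r ring \<Rightarrow> 'r set \<Rightarrow> ('r, 'm) module \<Rightarrow> 'm set" where
  "torsion R a M = {x \<in> carrier M. \<exists>n. \<forall>r \<in> ideal_pow R a n. r \<odot>\<^bsub>M\<^esub> x = \<zero>\<^bsub>M\<^esub>}"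

definition annih_sub :: "'r ring \<Rightarrow> 'r set \<Rightarrow> ('r, 'm) module \<Rightarrow> ('r, 'm) module" where
  "annih_sub R a M = M\<lparr>carrier := {x \<in> carrier M. \<forall>r \<in> a. r \<odot>\<^bsub>M\<^esub> x = \<zero>\<^bsub>M\<^esub>}\<rparr>"

definition cond_C :: "'r ring \<Rightarrow> 'r set \<Rightarrow> ('r, 'm) modclass \<Rightarrow> ('r, 'm) module \<Rightarrow> bool" where
  "cond_C R a S M \<longleftrightarrow> (torsion R a M = carrier M \<and> S (annih_sub R a M) \<longrightarrow> S M)"

definition S_sub :: "'r ring \<Rightarrow> 'r set \<Rightarrow> ('r, 'm) modclass \<Rightarrow> ('r, 'm) modclass" where
  "S_sub R a S M \<longleftrightarrow> module R M \<and> cond_C R a S M"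

definition satisfies_C :: "'r ring \<Rightarrow> 'r set \<Rightarrow> ('r, 'm) modclass \<Rightarrow> bool" where
  "satisfies_C R a S \<longleftrightarrow> (\<forall>M. module R M \<longrightarrow> cond_C R a S M)"

end

theory Submission
  imports Defs
begin

text \<open>
  Let M be \<open>a\<close>-torsion and in \<open>(S2 S1)_a\<close>, and let \<open>(0 :_M a)\<close> lie in \<open>S1 S2\<close>, i.e. contain a
  submodule K in S1 with \<open>(0 :_M a)/K\<close> in S2. The quotient \<open>M' = M/K\<close> again lies in \<open>(S2 S1)_a\<close>
  and is \<open>a\<close>-torsion, and \<open>(0 :_M' a) = T/K\<close> for \<open>T = (K :_M a)\<close>. This module is an extension of
  \<open>(0 :_M a)/K\<close>, which is in S2, by \<open>T/(0 :_M a)\<close>, which is in S1: for generators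
  \<open>g_1, ..., g_n\<close> of \<open>a\<close> it has a finite filtration whose factors are embedded into K by
  multiplication with the \<open>g_i\<close>. Hence \<open>M'\<close> lies in \<open>S2 S1\<close>, which is contained in \<open>S1 S2\<close>, and M,
  an extension of K by \<open>M'\<close>, lies in \<open>S1 S2\<close> because this class is closed under extensions.
\<close>

lemma (in module) submodule_zero_closed:
  assumes "submodule K R M"
  shows "\<zero>\<^bsub>M\<^esub> \<in> K"
  using subgroup.one_closed[OF submodule.axioms(1)[OF assms]] by simp

lemma (in module) zero_submodule: "submodule {\<zero>\<^bsub>M\<^esub>} R M"
  by (rule submoduleI) auto

lemma (in module) submodule_Int:
  assumes "submodule A R M" and "submodule B R M"
  shows "submodule (A \<inter> B) R M"
  using submoduleE[OF assms(1)] submoduleE[OF assms(2)] submodule_zero_closed[OF assms(1)]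
    submodule_zero_closed[OF assms(2)]
  by (intro submoduleI) auto

lemma mod_hom_zero:
  assumes A: "module R A" and B: "module R B" and f: "mod_hom R A B f"
  shows "f \<zero>\<^bsub>A\<^esub> = \<zero>\<^bsub>B\<^esub>"
proof -
  interpret A: module R A by fact
  interpret B: module R B by fact
  have "f \<zero>\<^bsub>A\<^esub> = f (\<zero>\<^bsub>R\<^esub> \<odot>\<^bsub>A\<^esub> \<zero>\<^bsub>A\<^esub>)" by simp
  also have "\<dots> = \<zero>\<^bsub>R\<^esub> \<odot>\<^bsub>B\<^esub> f \<zero>\<^bsub>A\<^esub>"
    using f A.zero_closed A.R.zero_closed unfolding mod_hom_def by blast
  also have "\<dots> = \<zero>\<^bsub>B\<^esub>" using f by (simp add: mod_hom_def Pi_iff)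
  finally show ?thesis .
qed

lemma mod_hom_image_submodule:
  assumes A: "module R A" and B: "module R B" and f: "mod_hom R A B f"
  shows "submodule (f ` carrier A) R B"
proof -
  interpret A: module R A by fact
  interpret B: module R B by fact
  have f_closed: "f ` carrier A \<subseteq> carrier B" using f by (auto simp: mod_hom_def)
  have smult: "r \<odot>\<^bsub>B\<^esub> b \<in> f ` carrier A" if r: "r \<in> carrier R" and b: "b \<in> f ` carrier A" for r b
  proof -
    obtain x where "x \<in> carrier A" "b = f x" using b by blast
    then have "r \<odot>\<^bsub>B\<^esub> b = f (r \<odot>\<^bsub>A\<^esub> x)" "r \<odot>\<^bsub>A\<^esub> x \<in> carrier A"
      using f r by (simp_all add: mod_hom_def)
    then show ?thesis by blast
  qed
  show ?thesis
  proof (rule B.submoduleI)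
    show "\<zero>\<^bsub>B\<^esub> \<in> f ` carrier A" using mod_hom_zero[OF A B f] A.zero_closed by (metis image_eqI)
    show "\<ominus>\<^bsub>B\<^esub> b \<in> f ` carrier A" if "b \<in> f ` carrier A" for b
    proof -
      have "\<ominus>\<^bsub>B\<^esub> b = (\<ominus>\<^bsub>R\<^esub> \<one>\<^bsub>R\<^esub>) \<odot>\<^bsub>B\<^esub> b"
        using that f_closed by (auto simp: B.smult_l_minus)
      then show ?thesis using smult[OF _ that] by simp
    qed
    show "b \<oplus>\<^bsub>B\<^esub> c \<in> f ` carrier A" if b: "b \<in> f ` carrier A" and c: "c \<in> f ` carrier A" for b c
    proof -
      obtain x y where "x \<in> carrier A" "y \<in> carrier A" "b = f x" "c = f y" using b c by blast
      then have "b \<oplus>\<^bsub>B\<^esub> c = f (x \<oplus>\<^bsub>A\<^esub> y)" "x \<oplus>\<^bsub>A\<^esub> y \<in> carrier A"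
        using f by (simp_all add: mod_hom_def)
      then show ?thesis by blast
    qed
  qed (fact f_closed smult)+
qed

lemma mod_hom_inv_into:
  assumes A: "module R A" and B: "module R B" and f: "mod_hom R A B f"
    and bij: "bij_betw f (carrier A) (carrier B)"
  shows "mod_hom R B A (inv_into (carrier A) f)"
proof -
  interpret A: module R A by fact
  let ?g = "inv_into (carrier A) f"
  have g_closed: "\<And>y. y \<in> carrier B \<Longrightarrow> ?g y \<in> carrier A"
    and f_g: "\<And>y. y \<in> carrier B \<Longrightarrow> f (?g y) = y"
    and g_f: "\<And>x. x \<in> carrier A \<Longrightarrow> ?g (f x) = x"
    using bij by (auto simp: bij_betw_def inv_into_into f_inv_into_f)
  show ?thesis unfolding mod_hom_def
  proof (intro conjI ballI)
    show "?g \<in> carrier B \<rightarrow> carrier A" using g_closed by auto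
  next
    fix x y assume x: "x \<in> carrier B" and y: "y \<in> carrier B"
    have "f (?g x \<oplus>\<^bsub>A\<^esub> ?g y) = x \<oplus>\<^bsub>B\<^esub> y"
      using f g_closed[OF x] g_closed[OF y] f_g x y by (simp add: mod_hom_def)
    then show "?g (x \<oplus>\<^bsub>B\<^esub> y) = ?g x \<oplus>\<^bsub>A\<^esub> ?g y"
      using g_f g_closed[OF x] g_closed[OF y] by (metis A.a_closed)
  next
    fix r x assume r: "r \<in> carrier R" and x: "x \<in> carrier B"
    have "f (r \<odot>\<^bsub>A\<^esub> ?g x) = r \<odot>\<^bsub>B\<^esub> x"
      using f r g_closed[OF x] f_g x by (simp add: mod_hom_def)
    then show "?g (r \<odot>\<^bsub>B\<^esub> x) = r \<odot>\<^bsub>A\<^esub> ?g x"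
      using g_f g_closed[OF x] r by (metis A.smult_closed)
  qed
qed

subsection \<open>Subquotients on coset representatives\<close>

text \<open>
  A quotient must live in the carrier type of M, so \<open>T/K\<close> is realised on chosen representatives
  of the cosets; the coset K itself is represented by zero, so that every \<open>subquot M K T\<close> shares
  its zero with M.
\<close>

definition coset_rep :: "('r, 'm, 'e) module_scheme \<Rightarrow> 'm set \<Rightarrow> 'm \<Rightarrow> 'm" where
  "coset_rep M K x = (if x \<in> K then \<zero>\<^bsub>M\<^esub> else (SOME y. \<exists>k\<in>K. y = x \<oplus>\<^bsub>M\<^esub> k))"

definition subquot :: "('r, 'm, 'e) module_scheme \<Rightarrow> 'm set \<Rightarrow> 'm set \<Rightarrow> ('r, 'm, 'e) module_scheme" where
  "subquot M K T = M\<lparr>carrier := coset_rep M K ` T,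
     add := \<lambda>x y. coset_rep M K (x \<oplus>\<^bsub>M\<^esub> y), smult := \<lambda>r x. coset_rep M K (r \<odot>\<^bsub>M\<^esub> x)\<rparr>"

lemma subquot_simps:
  "carrier (subquot M K T) = coset_rep M K ` T"
  "x \<oplus>\<^bsub>subquot M K T\<^esub> y = coset_rep M K (x \<oplus>\<^bsub>M\<^esub> y)"
  "r \<odot>\<^bsub>subquot M K T\<^esub> x = coset_rep M K (r \<odot>\<^bsub>M\<^esub> x)"
  "\<zero>\<^bsub>subquot M K T\<^esub> = \<zero>\<^bsub>M\<^esub>"
  by (simp_all add: subquot_def)

lemma coset_rep_carrier_update: "coset_rep (M\<lparr>carrier := C\<rparr>) K = coset_rep M K"
  by (simp add: coset_rep_def fun_eq_iff)

lemma subquot_carrier_update: "subquot (M\<lparr>carrier := C\<rparr>) K T = subquot M K T"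
  by (simp add: subquot_def coset_rep_carrier_update)

context module
begin

lemma coset_rep_in_coset:
  assumes K: "submodule K R M" and x: "x \<in> carrier M"
  shows "\<exists>k\<in>K. coset_rep M K x = x \<oplus>\<^bsub>M\<^esub> k"
proof (cases "x \<in> K")
  case True
  then show ?thesis
    using x submoduleE(3)[OF K] by (auto simp: coset_rep_def r_neg intro!: bexI[of _ "\<ominus>\<^bsub>M\<^esub> x"])
next
  case False
  have "\<exists>y. \<exists>k\<in>K. y = x \<oplus>\<^bsub>M\<^esub> k" using submodule_zero_closed[OF K] by blast
  then have "\<exists>k\<in>K. (SOME y. \<exists>k\<in>K. y = x \<oplus>\<^bsub>M\<^esub> k) = x \<oplus>\<^bsub>M\<^esub> k" by (rule someI_ex)
  then show ?thesis using False by (simp add: coset_rep_def)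
qed

lemma coset_rep_closed:
  assumes "submodule K R M" "x \<in> carrier M"
  shows "coset_rep M K x \<in> carrier M"
  using coset_rep_in_coset[OF assms] submoduleE(1)[OF assms(1)] assms(2) by auto

lemma coset_rep_add_submodule:
  assumes K: "submodule K R M" and x: "x \<in> carrier M" and k: "k \<in> K"
  shows "coset_rep M K (x \<oplus>\<^bsub>M\<^esub> k) = coset_rep M K x"
proof -
  have k_carr: "k \<in> carrier M" using k submoduleE(1)[OF K] by auto
  have x_eq: "x = (x \<oplus>\<^bsub>M\<^esub> k) \<oplus>\<^bsub>M\<^esub> \<ominus>\<^bsub>M\<^esub> k" using x k_carr by (simp add: a_assoc r_neg)
  have "x \<oplus>\<^bsub>M\<^esub> k \<in> K \<longleftrightarrow> x \<in> K"
  proof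
    assume "x \<oplus>\<^bsub>M\<^esub> k \<in> K"
    then have "(x \<oplus>\<^bsub>M\<^esub> k) \<oplus>\<^bsub>M\<^esub> \<ominus>\<^bsub>M\<^esub> k \<in> K" using k submoduleE(3,5)[OF K] by blast
    then show "x \<in> K" using x_eq by simp
  qed (use k submoduleE(5)[OF K] in blast)
  moreover have "(\<exists>k'\<in>K. y = (x \<oplus>\<^bsub>M\<^esub> k) \<oplus>\<^bsub>M\<^esub> k') \<longleftrightarrow> (\<exists>k'\<in>K. y = x \<oplus>\<^bsub>M\<^esub> k')" for y
  proof
    assume "\<exists>k'\<in>K. y = (x \<oplus>\<^bsub>M\<^esub> k) \<oplus>\<^bsub>M\<^esub> k'"
    then obtain k' where k': "k' \<in> K" "y = (x \<oplus>\<^bsub>M\<^esub> k) \<oplus>\<^bsub>M\<^esub> k'" by blast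
    then have "y = x \<oplus>\<^bsub>M\<^esub> (k \<oplus>\<^bsub>M\<^esub> k')"
      using x k_carr submoduleE(1)[OF K] by (auto simp: a_assoc)
    then show "\<exists>k'\<in>K. y = x \<oplus>\<^bsub>M\<^esub> k'" using k k' submoduleE(5)[OF K] by blast
  next
    assume "\<exists>k'\<in>K. y = x \<oplus>\<^bsub>M\<^esub> k'"
    then obtain k' where k': "k' \<in> K" "y = x \<oplus>\<^bsub>M\<^esub> k'" by blast
    then have "y = (x \<oplus>\<^bsub>M\<^esub> k) \<oplus>\<^bsub>M\<^esub> (\<ominus>\<^bsub>M\<^esub> k \<oplus>\<^bsub>M\<^esub> k')"
      using x k_carr submoduleE(1)[OF K] by (simp add: a_assoc r_neg2 subsetD)
    then show "\<exists>k''\<in>K. y = (x \<oplus>\<^bsub>M\<^esub> k) \<oplus>\<^bsub>M\<^esub> k''"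
      using k k' submoduleE(3,5)[OF K] by blast
  qed
  ultimately show ?thesis unfolding coset_rep_def by simp
qed

lemma coset_rep_idem:
  assumes "submodule K R M" "x \<in> carrier M"
  shows "coset_rep M K (coset_rep M K x) = coset_rep M K x"
  using coset_rep_in_coset[OF assms] coset_rep_add_submodule[OF assms] by auto

lemma coset_rep_zero:
  assumes "submodule K R M"
  shows "coset_rep M K \<zero>\<^bsub>M\<^esub> = \<zero>\<^bsub>M\<^esub>"
  using submodule_zero_closed[OF assms] by (simp add: coset_rep_def)

lemma coset_rep_eq_zero_iff:
  assumes K: "submodule K R M" and x: "x \<in> carrier M"
  shows "coset_rep M K x = \<zero>\<^bsub>M\<^esub> \<longleftrightarrow> x \<in> K"
proof
  assume rep_zero: "coset_rep M K x = \<zero>\<^bsub>M\<^esub>"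
  obtain k where k: "k \<in> K" "coset_rep M K x = x \<oplus>\<^bsub>M\<^esub> k" using coset_rep_in_coset[OF K x] by blast
  then have "\<ominus>\<^bsub>M\<^esub> k = x"
    using rep_zero x submoduleE(1)[OF K] by (intro minus_equality) auto
  then show "x \<in> K" using submoduleE(3)[OF K] k by blast
qed (simp add: coset_rep_def)

lemma coset_rep_add_left:
  assumes K: "submodule K R M" and u: "u \<in> carrier M" and v: "v \<in> carrier M"
  shows "coset_rep M K (coset_rep M K u \<oplus>\<^bsub>M\<^esub> v) = coset_rep M K (u \<oplus>\<^bsub>M\<^esub> v)"
proof -
  obtain k where k: "k \<in> K" "coset_rep M K u = u \<oplus>\<^bsub>M\<^esub> k" using coset_rep_in_coset[OF K u] by blast
  then have "coset_rep M K u \<oplus>\<^bsub>M\<^esub> v = (u \<oplus>\<^bsub>M\<^esub> v) \<oplus>\<^bsub>M\<^esub> k"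
    using u v submoduleE(1)[OF K] by (auto simp: a_ac)
  then show ?thesis using coset_rep_add_submodule[OF K _ k(1)] u v by simp
qed

lemma coset_rep_add_right:
  assumes "submodule K R M" "u \<in> carrier M" "v \<in> carrier M"
  shows "coset_rep M K (u \<oplus>\<^bsub>M\<^esub> coset_rep M K v) = coset_rep M K (u \<oplus>\<^bsub>M\<^esub> v)"
  using coset_rep_add_left[OF assms(1,3,2)] assms coset_rep_closed[OF assms(1,3)] by (simp add: a_comm)

lemma coset_rep_smult:
  assumes K: "submodule K R M" and r: "r \<in> carrier R" and u: "u \<in> carrier M"
  shows "coset_rep M K (r \<odot>\<^bsub>M\<^esub> coset_rep M K u) = coset_rep M K (r \<odot>\<^bsub>M\<^esub> u)"
proof -
  obtain k where k: "k \<in> K" "coset_rep M K u = u \<oplus>\<^bsub>M\<^esub> k" using coset_rep_in_coset[OF K u] by blast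
  then have "r \<odot>\<^bsub>M\<^esub> coset_rep M K u = (r \<odot>\<^bsub>M\<^esub> u) \<oplus>\<^bsub>M\<^esub> (r \<odot>\<^bsub>M\<^esub> k)"
    using u r submoduleE(1)[OF K] by (auto simp: smult_r_distr)
  then show ?thesis using coset_rep_add_submodule[OF K _ submoduleE(4)[OF K r k(1)]] u r by simp
qed

lemma coset_rep_mem_submodule:
  assumes K: "submodule K R M" and T: "submodule T R M" and "K \<subseteq> T" and x: "x \<in> T"
  shows "coset_rep M K x \<in> T"
proof -
  have "x \<in> carrier M" using x submoduleE(1)[OF T] by blast
  then obtain k where "k \<in> K" "coset_rep M K x = x \<oplus>\<^bsub>M\<^esub> k" using coset_rep_in_coset[OF K] by blast
  then show ?thesis using x \<open>K \<subseteq> T\<close> submoduleE(5)[OF T] by auto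
qed

lemma coset_rep_coset_rep:
  assumes K: "submodule K R M" and K': "submodule K' R M" and "K \<subseteq> K'" and x: "x \<in> carrier M"
  shows "coset_rep M K' (coset_rep M K x) = coset_rep M K' x"
  using coset_rep_in_coset[OF K x] coset_rep_add_submodule[OF K' x] assms(3) by auto

lemma coset_rep_eq_iff:
  assumes K: "submodule K R M" and u: "u \<in> carrier M" and v: "v \<in> carrier M"
  shows "coset_rep M K u = coset_rep M K v \<longleftrightarrow> u \<oplus>\<^bsub>M\<^esub> \<ominus>\<^bsub>M\<^esub> v \<in> K"
proof
  assume eq: "coset_rep M K u = coset_rep M K v"
  have "coset_rep M K (u \<oplus>\<^bsub>M\<^esub> \<ominus>\<^bsub>M\<^esub> v) = coset_rep M K (coset_rep M K u \<oplus>\<^bsub>M\<^esub> \<ominus>\<^bsub>M\<^esub> v)"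
    using coset_rep_add_left[OF K u] v by simp
  also have "\<dots> = coset_rep M K (v \<oplus>\<^bsub>M\<^esub> \<ominus>\<^bsub>M\<^esub> v)"
    using eq coset_rep_add_left[OF K v] v by simp
  also have "\<dots> = \<zero>\<^bsub>M\<^esub>"
    using v by (simp add: M.r_neg coset_rep_zero[OF K])
  finally show "u \<oplus>\<^bsub>M\<^esub> \<ominus>\<^bsub>M\<^esub> v \<in> K"
    using u v by (simp add: coset_rep_eq_zero_iff[OF K])
next
  assume k: "u \<oplus>\<^bsub>M\<^esub> \<ominus>\<^bsub>M\<^esub> v \<in> K"
  have "v \<oplus>\<^bsub>M\<^esub> (u \<oplus>\<^bsub>M\<^esub> \<ominus>\<^bsub>M\<^esub> v) = u"
    using u v by (simp add: M.a_ac M.r_neg)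
  then show "coset_rep M K u = coset_rep M K v"
    using coset_rep_add_submodule[OF K v k] by simp
qed

lemma subquot_module:
  assumes K: "submodule K R M" and T: "submodule T R M" and KT: "K \<subseteq> T"
  shows "module R (subquot M K T)"
proof -
  let ?Q = "subquot M K T"
  have T_carr: "\<And>u. u \<in> T \<Longrightarrow> u \<in> carrier M" using submoduleE(1)[OF T] by blast
  note rep_simps = coset_rep_add_left[OF K] coset_rep_add_right[OF K] coset_rep_smult[OF K]
    coset_rep_closed[OF K] coset_rep_zero[OF K] subquot_simps(2-4)
  have Q_carr: "\<And>x. x \<in> carrier ?Q \<Longrightarrow> x \<in> carrier M"
    using T_carr by (auto simp: subquot_simps rep_simps)
  have rep_idem: "\<And>x. x \<in> carrier ?Q \<Longrightarrow> coset_rep M K x = x"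
    using T_carr by (auto simp: subquot_simps coset_rep_idem[OF K])
  have add_closed: "x \<oplus>\<^bsub>?Q\<^esub> y \<in> carrier ?Q" if "x \<in> carrier ?Q" "y \<in> carrier ?Q" for x y
    using that T_carr submoduleE(5)[OF T] by (auto simp: subquot_simps rep_simps)
  have smult_closed: "r \<odot>\<^bsub>?Q\<^esub> x \<in> carrier ?Q" if "r \<in> carrier R" "x \<in> carrier ?Q" for r x
    using that T_carr submoduleE(4)[OF T] by (auto simp: subquot_simps rep_simps)
  show ?thesis
  proof (rule moduleI)
    show "cring R" by (rule R.is_cring)
    show "abelian_group ?Q"
    proof (rule abelian_groupI)
      show "\<zero>\<^bsub>?Q\<^esub> \<in> carrier ?Q"
        using submodule_zero_closed[OF T] by (force simp: subquot_simps rep_simps)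
      show "\<exists>y\<in>carrier ?Q. y \<oplus>\<^bsub>?Q\<^esub> x = \<zero>\<^bsub>?Q\<^esub>" if x: "x \<in> carrier ?Q" for x
      proof -
        obtain u where u: "u \<in> T" "x = coset_rep M K u" using x by (auto simp: subquot_simps)
        then have "coset_rep M K (\<ominus>\<^bsub>M\<^esub> u) \<in> carrier ?Q"
          using submoduleE(3)[OF T] by (simp add: subquot_simps)
        moreover have "coset_rep M K (\<ominus>\<^bsub>M\<^esub> u) \<oplus>\<^bsub>?Q\<^esub> x = \<zero>\<^bsub>?Q\<^esub>"
          using u T_carr by (simp add: rep_simps l_neg)
        ultimately show ?thesis by blast
      qed
    qed (use add_closed Q_carr rep_idem in \<open>auto simp: rep_simps a_ac\<close>)
  qed (use smult_closed Q_carr rep_idem in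
        \<open>auto simp: rep_simps smult_l_distr smult_r_distr smult_assoc1\<close>)
qed

end

lemma coset_rep_mod_hom:
  fixes M :: "('r, 'm) module"
  assumes M: "module R M" and K: "submodule K R M"
  shows "mod_hom R M (subquot M K (carrier M)) (coset_rep M K)"
  using module.coset_rep_closed[OF M K] module.coset_rep_add_left[OF M K] module.coset_rep_add_right[OF M K]
    module.coset_rep_smult[OF M K]
  by (auto simp: mod_hom_def subquot_simps)

lemma subquot_induced_hom:
  fixes M :: "('r, 'm) module" and N :: "('r, 'n) module"
  assumes M: "module R M" and K: "submodule K R M" and C: "submodule C R M" and KC: "K \<subseteq> C"
    and N: "module R N" and g: "mod_hom R (M\<lparr>carrier := C\<rparr>) N g"
    and ker: "K = {x \<in> C. g x = \<zero>\<^bsub>N\<^esub>}"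
  shows "mod_hom R (subquot M K C) N g" and "inj_on g (carrier (subquot M K C))"
    and "g ` carrier (subquot M K C) = g ` C"
proof -
  interpret module R M by fact
  interpret N: module R N by fact
  have C_carr: "\<And>u. u \<in> C \<Longrightarrow> u \<in> carrier M" using submoduleE(1)[OF C] by blast
  have g_closed: "\<And>x. x \<in> C \<Longrightarrow> g x \<in> carrier N"
    and g_add: "\<And>x y. x \<in> C \<Longrightarrow> y \<in> C \<Longrightarrow> g (x \<oplus>\<^bsub>M\<^esub> y) = g x \<oplus>\<^bsub>N\<^esub> g y"
    and g_smult: "\<And>r x. r \<in> carrier R \<Longrightarrow> x \<in> C \<Longrightarrow> g (r \<odot>\<^bsub>M\<^esub> x) = r \<odot>\<^bsub>N\<^esub> g x"
    using g by (auto simp: mod_hom_def)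
  have g_rep: "g (coset_rep M K x) = g x" if x: "x \<in> C" for x
  proof -
    obtain k where k: "k \<in> K" "coset_rep M K x = x \<oplus>\<^bsub>M\<^esub> k" using coset_rep_in_coset[OF K C_carr[OF x]] by blast
    then show ?thesis using g_add x KC ker g_closed[OF x] by auto
  qed
  have rep_C: "\<And>x. x \<in> C \<Longrightarrow> coset_rep M K x \<in> C" using coset_rep_mem_submodule[OF K C KC] .
  show "mod_hom R (subquot M K C) N g"
    unfolding mod_hom_def using g_closed rep_C g_rep g_add g_smult submoduleE(4,5)[OF C]
    by (auto simp: subquot_simps)
  show "inj_on g (carrier (subquot M K C))"
  proof (rule inj_onI)
    fix x y assume "x \<in> carrier (subquot M K C)" "y \<in> carrier (subquot M K C)" and "g x = g y"
    then obtain u v where uv: "u \<in> C" "v \<in> C" "x = coset_rep M K u" "y = coset_rep M K v" "g u = g v"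
      using g_rep by (auto simp: subquot_simps)
    have neg_v: "\<ominus>\<^bsub>M\<^esub> v = (\<ominus>\<^bsub>R\<^esub> \<one>\<^bsub>R\<^esub>) \<odot>\<^bsub>M\<^esub> v" using C_carr[OF uv(2)] by (simp add: smult_l_minus)
    have "g (\<ominus>\<^bsub>M\<^esub> v) = (\<ominus>\<^bsub>R\<^esub> \<one>\<^bsub>R\<^esub>) \<odot>\<^bsub>N\<^esub> g v"
      using uv(2) neg_v g_smult by simp
    then have "g (u \<oplus>\<^bsub>M\<^esub> \<ominus>\<^bsub>M\<^esub> v) = g u \<oplus>\<^bsub>N\<^esub> (\<ominus>\<^bsub>R\<^esub> \<one>\<^bsub>R\<^esub>) \<odot>\<^bsub>N\<^esub> g v"
      using uv g_add submoduleE(3)[OF C] by simp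
    then have "u \<oplus>\<^bsub>M\<^esub> \<ominus>\<^bsub>M\<^esub> v \<in> K"
      using uv g_closed ker submoduleE(3,5)[OF C] by (simp add: N.smult_l_minus N.r_neg)
    then show "x = y" using uv C_carr coset_rep_eq_iff[OF K] by simp
  qed
  have "g ` carrier (subquot M K C) = (\<lambda>x. g (coset_rep M K x)) ` C"
    by (simp add: subquot_simps image_image)
  then show "g ` carrier (subquot M K C) = g ` C"
    using g_rep by (simp cong: image_cong)
qed

lemma subquot_ext_cat:
  fixes M :: "('r, 'm) module"
  assumes M: "module R M" and K: "submodule K R M" and K': "submodule K' R M" and T: "submodule T R M"
    and KK': "K \<subseteq> K'" and K'T: "K' \<subseteq> T" and S: "S (subquot M K K')" and S': "S' (subquot M K' T)"
  shows "ext_cat R S S' (subquot M K T)"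
proof -
  interpret module R M by fact
  have T_carr: "\<And>u. u \<in> T \<Longrightarrow> u \<in> carrier M" using submoduleE(1)[OF T] by blast
  note rep_simps = coset_rep_add_left[OF K] coset_rep_add_right[OF K] coset_rep_closed[OF K]
    coset_rep_smult[OF K] coset_rep_add_left[OF K'] coset_rep_add_right[OF K'] coset_rep_closed[OF K']
    coset_rep_smult[OF K'] coset_rep_coset_rep[OF K K' KK'] subquot_simps
  show ?thesis unfolding ext_cat_def
  proof (intro conjI exI)
    show "module R (subquot M K T)" using subquot_module[OF K T] KK' K'T by blast
    show "module R (subquot M K K')" using subquot_module[OF K K' KK'] .
    show "module R (subquot M K' T)" using subquot_module[OF K' T K'T] .
    show "mod_hom R (subquot M K K') (subquot M K T) id" using K'T by (auto simp: mod_hom_def subquot_simps)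
    show "inj_on id (carrier (subquot M K K'))" by simp
    show "mod_hom R (subquot M K T) (subquot M K' T) (coset_rep M K')"
      using T_carr by (auto simp: mod_hom_def rep_simps)
    show "coset_rep M K' ` carrier (subquot M K T) = carrier (subquot M K' T)"
      using T_carr by (auto simp: rep_simps image_iff)
    show "id ` carrier (subquot M K K') = {x \<in> carrier (subquot M K T). coset_rep M K' x = \<zero>\<^bsub>subquot M K' T\<^esub>}"
      using T_carr submoduleE(1)[OF K'] K'T by (auto simp: rep_simps coset_rep_eq_zero_iff[OF K'] image_iff)
  qed (fact S S')+
qed

subsection \<open>Extension subcategories\<close>

lemma closed_subD:
  assumes "closed_sub R S" and "module R M" and "module R N" and "mod_hom R N M f"
    and "inj_on f (carrier N)" and "S M"
  shows "S N"
  using assms unfolding closed_sub_def by blast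

lemma closed_quotD:
  assumes "closed_quot R S" and "module R M" and "module R N" and "mod_hom R M N g"
    and "g ` carrier M = carrier N" and "S M"
  shows "S N"
  using assms unfolding closed_quot_def by blast

lemma ext_cat_leftI:
  assumes T: "contains_zero R T" and M: "module R M" and "S M"
  shows "ext_cat R S T M"
proof -
  interpret module R M by fact
  let ?Z = "M\<lparr>carrier := {\<zero>\<^bsub>M\<^esub>}\<rparr>"
  have Z: "module R ?Z" using submodule.submodule_is_module[OF zero_submodule M] .
  show ?thesis unfolding ext_cat_def
  proof (intro conjI exI)
    show "mod_hom R M M id" "mod_hom R M ?Z (\<lambda>_. \<zero>\<^bsub>M\<^esub>)" by (auto simp: mod_hom_def)
    show "T ?Z" using T Z by (simp add: contains_zero_def)
  qed (use M Z \<open>S M\<close> in auto)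
qed

lemma ext_cat_rightI:
  assumes S: "contains_zero R S" and M: "module R M" and "T M"
  shows "ext_cat R S T M"
proof -
  interpret module R M by fact
  let ?Z = "M\<lparr>carrier := {\<zero>\<^bsub>M\<^esub>}\<rparr>"
  have Z: "module R ?Z" using submodule.submodule_is_module[OF zero_submodule M] .
  show ?thesis unfolding ext_cat_def
  proof (intro conjI exI)
    show "mod_hom R ?Z M id" "mod_hom R M M id" by (auto simp: mod_hom_def)
    show "S ?Z" using S Z by (simp add: contains_zero_def)
  qed (use M Z \<open>T M\<close> in auto)
qed

lemma ext_cat_mono:
  assumes "\<And>L. module R L \<Longrightarrow> S L \<Longrightarrow> S' L" and "\<And>N. module R N \<Longrightarrow> T N \<Longrightarrow> T' N"
    and "ext_cat R S T M"
  shows "ext_cat R S' T' M"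
proof -
  obtain L N f g where M: "module R M" and L: "module R L" and N: "module R N"
    and seq: "mod_hom R L M f" "inj_on f (carrier L)" "mod_hom R M N g" "g ` carrier M = carrier N"
      "f ` carrier L = {x \<in> carrier M. g x = \<zero>\<^bsub>N\<^esub>}"
    and "S L" "T N"
    using assms(3) unfolding ext_cat_def by blast
  then have "S' L" "T' N" using assms(1,2) by blast+
  with M L N seq show ?thesis unfolding ext_cat_def by blast
qed

lemma ext_cat_swap:
  assumes "closed_ext R (ext_cat R S T)" and "contains_zero R S" and "contains_zero R T"
    and "ext_cat R T S M"
  shows "ext_cat R S T M"
proof -
  have "ext_cat R (ext_cat R S T) (ext_cat R S T) M"
    using ext_cat_mono[OF ext_cat_rightI[OF assms(2)] ext_cat_leftI[OF assms(3)] assms(4)] .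
  then show ?thesis using assms(1) by (simp add: closed_ext_def)
qed

lemma serre_contains_zero:
  assumes S: "serre R S" and "S L"
  shows "contains_zero R S"
  unfolding contains_zero_def
proof (intro allI impI)
  fix Z :: "('a, 'b) module" assume Z: "module R Z \<and> carrier Z = {\<zero>\<^bsub>Z\<^esub>}"
  have L: "module R L" using S \<open>S L\<close> by (auto simp: serre_def subcat_def)
  then interpret module R L .
  have "mod_hom R Z L (\<lambda>_. \<zero>\<^bsub>L\<^esub>)" by (auto simp: mod_hom_def)
  moreover have "inj_on (\<lambda>_. \<zero>\<^bsub>L\<^esub>) (carrier Z)" using Z by (simp add: inj_on_def)
  ultimately show "S Z" using S \<open>S L\<close> L Z unfolding serre_def closed_sub_def by blast
qed

lemma serre_iso_closed:
  assumes "serre R S"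
  shows "iso_closed R S"
  unfolding iso_closed_def
proof (intro allI impI)
  fix M N :: "('a, 'b) module" and f
  assume "module R M \<and> module R N \<and> mod_hom R M N f \<and> bij_betw f (carrier M) (carrier N) \<and> S M"
  then have "module R M" "module R N" "mod_hom R N M (inv_into (carrier M) f)"
    "inj_on (inv_into (carrier M) f) (carrier N)" "S M"
    using mod_hom_inv_into bij_betw_inv_into bij_betw_imp_inj_on by blast+
  then show "S N" using assms by (auto simp: serre_def closed_sub_def)
qed

lemma ext_cat_subquotI:
  fixes M :: "('r, 'm) module"
  assumes M: "module R M" and K: "submodule K R M"
    and "S (M\<lparr>carrier := K\<rparr>)" and "T (subquot M K (carrier M))"
  shows "ext_cat R S T M"
proof -
  interpret module R M by fact
  show ?thesis unfolding ext_cat_def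
  proof (intro conjI exI)
    show "module R (M\<lparr>carrier := K\<rparr>)" using submodule.submodule_is_module[OF K M] .
    show "module R (subquot M K (carrier M))"
      using subquot_module[OF K carrier_is_submodule submoduleE(1)[OF K]] .
    show "mod_hom R (M\<lparr>carrier := K\<rparr>) M id" using submoduleE(1)[OF K] by (auto simp: mod_hom_def)
    show "mod_hom R M (subquot M K (carrier M)) (coset_rep M K)" using coset_rep_mod_hom[OF M K] .
    show "id ` carrier (M\<lparr>carrier := K\<rparr>) = {x \<in> carrier M. coset_rep M K x = \<zero>\<^bsub>subquot M K (carrier M)\<^esub>}"
      using submoduleE(1)[OF K] by (auto simp: subquot_simps coset_rep_eq_zero_iff[OF K])
  qed (use assms in \<open>auto simp: subquot_simps\<close>)
qed

lemma ext_cat_subquotE: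
  fixes M :: "('r, 'm) module"
  assumes "ext_cat R S T M" and S: "iso_closed R S" and T: "iso_closed R T"
  obtains K where "submodule K R M" "S (M\<lparr>carrier := K\<rparr>)" "T (subquot M K (carrier M))"
proof -
  obtain L N f g where M: "module R M" and L: "module R L" and N: "module R N"
    and f: "mod_hom R L M f" "inj_on f (carrier L)"
    and g: "mod_hom R M N g" "g ` carrier M = carrier N"
    and ker: "f ` carrier L = {x \<in> carrier M. g x = \<zero>\<^bsub>N\<^esub>}" and "S L" "T N"
    using assms(1) unfolding ext_cat_def by blast
  interpret module R M by fact
  let ?K = "f ` carrier L" and ?Q = "subquot M (f ` carrier L) (carrier M)"
  have K: "submodule ?K R M" using mod_hom_image_submodule[OF L M f(1)] .
  have K_mod: "module R (M\<lparr>carrier := ?K\<rparr>)" using submodule.submodule_is_module[OF K M] .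
  have "mod_hom R L (M\<lparr>carrier := ?K\<rparr>) f" using f(1) by (auto simp: mod_hom_def)
  moreover have "bij_betw f (carrier L) (carrier (M\<lparr>carrier := ?K\<rparr>))" using f(2) by (simp add: bij_betw_def)
  ultimately have "S (M\<lparr>carrier := ?K\<rparr>)" using S L K_mod \<open>S L\<close> unfolding iso_closed_def by blast
  moreover have "T ?Q"
  proof -
    have Q: "module R ?Q" using subquot_module[OF K carrier_is_submodule submoduleE(1)[OF K]] .
    have "mod_hom R (M\<lparr>carrier := carrier M\<rparr>) N g" using g(1) by simp
    note g_induced = subquot_induced_hom[OF M K carrier_is_submodule submoduleE(1)[OF K] N this ker]
    have "mod_hom R ?Q N g" "bij_betw g (carrier ?Q) (carrier N)"
      using g_induced g by (simp_all add: bij_betw_def)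
    then show ?thesis
      using mod_hom_inv_into[OF Q N] bij_betw_inv_into Q N \<open>T N\<close> T unfolding iso_closed_def by blast
  qed
  ultimately show ?thesis using K that by blast
qed

subsection \<open>Colon submodules and the annihilator filtration\<close>

definition mod_colon :: "('r, 'm, 'e) module_scheme \<Rightarrow> 'm set \<Rightarrow> 'r set \<Rightarrow> 'm set" where
  "mod_colon M K a = {x \<in> carrier M. \<forall>r\<in>a. r \<odot>\<^bsub>M\<^esub> x \<in> K}"

lemma annih_sub_eq_mod_colon: "annih_sub R a M = M\<lparr>carrier := mod_colon M {\<zero>\<^bsub>M\<^esub>} a\<rparr>"
  by (simp add: annih_sub_def mod_colon_def)

lemma mod_colon_antimono: "a \<subseteq> b \<Longrightarrow> mod_colon M K b \<subseteq> mod_colon M K a"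
  by (auto simp: mod_colon_def)

context module
begin

lemma mod_colon_submodule:
  assumes K: "submodule K R M" and a: "a \<subseteq> carrier R"
  shows "submodule (mod_colon M K a) R M"
proof (rule submoduleI)
  have r_carr: "\<And>r. r \<in> a \<Longrightarrow> r \<in> carrier R" using a by blast
  show "\<zero>\<^bsub>M\<^esub> \<in> mod_colon M K a"
    using submodule_zero_closed[OF K] r_carr by (simp add: mod_colon_def)
  show "\<ominus>\<^bsub>M\<^esub> x \<in> mod_colon M K a" if "x \<in> mod_colon M K a" for x
    using that submoduleE(3)[OF K] r_carr by (auto simp: mod_colon_def smult_r_minus)
  show "x \<oplus>\<^bsub>M\<^esub> y \<in> mod_colon M K a" if "x \<in> mod_colon M K a" "y \<in> mod_colon M K a" for x y
    using that submoduleE(5)[OF K] r_carr by (auto simp: mod_colon_def smult_r_distr)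
  show "b \<odot>\<^bsub>M\<^esub> x \<in> mod_colon M K a" if b: "b \<in> carrier R" and x: "x \<in> mod_colon M K a" for b x
  proof -
    have "r \<odot>\<^bsub>M\<^esub> (b \<odot>\<^bsub>M\<^esub> x) = b \<odot>\<^bsub>M\<^esub> (r \<odot>\<^bsub>M\<^esub> x)" if "r \<in> a" for r
      using r_carr[OF that] b x by (simp add: mod_colon_def smult_assoc1[symmetric] R.m_comm)
    then show ?thesis using b x submoduleE(4)[OF K] by (auto simp: mod_colon_def)
  qed
qed (auto simp: mod_colon_def)

lemma annihilator_ideal:
  assumes x: "x \<in> carrier M"
  shows "ideal {r \<in> carrier R. r \<odot>\<^bsub>M\<^esub> x = \<zero>\<^bsub>M\<^esub>} R"
proof (rule idealI)
  show "subgroup {r \<in> carrier R. r \<odot>\<^bsub>M\<^esub> x = \<zero>\<^bsub>M\<^esub>} (add_monoid R)"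
    using x by (intro R.add.subgroupI) (auto simp: smult_l_minus smult_l_distr)
  show "a \<otimes>\<^bsub>R\<^esub> r \<in> {r \<in> carrier R. r \<odot>\<^bsub>M\<^esub> x = \<zero>\<^bsub>M\<^esub>}" "r \<otimes>\<^bsub>R\<^esub> a \<in> {r \<in> carrier R. r \<odot>\<^bsub>M\<^esub> x = \<zero>\<^bsub>M\<^esub>}"
    if "a \<in> {r \<in> carrier R. r \<odot>\<^bsub>M\<^esub> x = \<zero>\<^bsub>M\<^esub>}" "r \<in> carrier R" for a r
    using that x by (auto simp: smult_assoc1 R.m_comm[of a r])
qed (rule R.ring_axioms)

lemma mod_colon_zero_genideal:
  assumes G: "G \<subseteq> carrier R"
  shows "mod_colon M {\<zero>\<^bsub>M\<^esub>} (Idl\<^bsub>R\<^esub> G) = mod_colon M {\<zero>\<^bsub>M\<^esub>} G"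
proof
  show "mod_colon M {\<zero>\<^bsub>M\<^esub>} (Idl\<^bsub>R\<^esub> G) \<subseteq> mod_colon M {\<zero>\<^bsub>M\<^esub>} G"
    using mod_colon_antimono[OF R.genideal_self[OF G]] .
  show "mod_colon M {\<zero>\<^bsub>M\<^esub>} G \<subseteq> mod_colon M {\<zero>\<^bsub>M\<^esub>} (Idl\<^bsub>R\<^esub> G)"
    using R.genideal_minimal[OF annihilator_ideal] G by (fastforce simp: mod_colon_def)
qed

end

lemma serre_subquot_smult_kernel:
  fixes M :: "('r, 'm) module"
  assumes M: "module R M" and S: "serre R S"
    and K: "submodule K R M" and SK: "S (M\<lparr>carrier := K\<rparr>)" and D: "submodule D R M"
    and s: "s \<in> carrier R" and sD: "\<And>x. x \<in> D \<Longrightarrow> s \<odot>\<^bsub>M\<^esub> x \<in> K"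
  shows "S (subquot M (D \<inter> mod_colon M {\<zero>\<^bsub>M\<^esub>} {s}) D)"
proof -
  interpret module R M by fact
  let ?D0 = "D \<inter> mod_colon M {\<zero>\<^bsub>M\<^esub>} {s}"
  have D0: "submodule ?D0 R M" using submodule_Int[OF D mod_colon_submodule[OF zero_submodule]] s by simp
  have D_carr: "D \<subseteq> carrier M" using submoduleE(1)[OF D] .
  have K_mod: "module R (M\<lparr>carrier := K\<rparr>)" using submodule.submodule_is_module[OF K M] .
  have "mod_hom R (M\<lparr>carrier := D\<rparr>) (M\<lparr>carrier := K\<rparr>) (\<lambda>x. s \<odot>\<^bsub>M\<^esub> x)"
    unfolding mod_hom_def using sD D_carr s
    by (auto simp: smult_r_distr smult_assoc1[symmetric] R.m_comm subsetD)
  moreover have "?D0 = {x \<in> D. s \<odot>\<^bsub>M\<^esub> x = \<zero>\<^bsub>M\<lparr>carrier := K\<rparr>\<^esub>}"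
    using D_carr by (auto simp: mod_colon_def)
  ultimately have "mod_hom R (subquot M ?D0 D) (M\<lparr>carrier := K\<rparr>) (\<lambda>x. s \<odot>\<^bsub>M\<^esub> x)"
    and "inj_on (\<lambda>x. s \<odot>\<^bsub>M\<^esub> x) (carrier (subquot M ?D0 D))"
    using subquot_induced_hom[OF M D0 D _ K_mod] by auto
  moreover have "closed_sub R S" using S by (simp add: serre_def)
  ultimately show ?thesis using closed_subD K_mod subquot_module[OF D0 D] SK by blast
qed

lemma serre_subquot_mod_colon:
  fixes M :: "('r, 'm) module"
  assumes M: "module R M" and S: "serre R S"
    and K: "submodule K R M" and SK: "S (M\<lparr>carrier := K\<rparr>)" and T: "submodule T R M"
    and "finite F" and "F \<subseteq> carrier R" and "T \<subseteq> mod_colon M K F"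
  shows "S (subquot M (T \<inter> mod_colon M {\<zero>\<^bsub>M\<^esub>} F) T)"
  using \<open>finite F\<close> \<open>F \<subseteq> carrier R\<close> \<open>T \<subseteq> mod_colon M K F\<close>
proof (induction F rule: finite_induct)
  interpret module R M by fact
  have T_carr: "T \<subseteq> carrier M" using submoduleE(1)[OF T] .
  case empty
  have "carrier (subquot M T T) = {\<zero>\<^bsub>subquot M T T\<^esub>}"
    using T_carr submodule_zero_closed[OF T] coset_rep_eq_zero_iff[OF T]
    by (force simp: subquot_simps)
  moreover have "module R (subquot M T T)" using subquot_module[OF T T] by simp
  moreover have "T \<inter> mod_colon M {\<zero>\<^bsub>M\<^esub>} {} = T" using T_carr by (auto simp: mod_colon_def)
  ultimately show ?case using serre_contains_zero[OF S SK] by (simp add: contains_zero_def)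
next
  interpret module R M by fact
  case (insert s F)
  define D where "D = T \<inter> mod_colon M {\<zero>\<^bsub>M\<^esub>} F"
  have D_s: "D \<inter> mod_colon M {\<zero>\<^bsub>M\<^esub>} {s} = T \<inter> mod_colon M {\<zero>\<^bsub>M\<^esub>} (insert s F)"
    by (auto simp: D_def mod_colon_def)
  have s: "s \<in> carrier R" and F: "F \<subseteq> carrier R" using insert.prems(1) by auto
  have D: "submodule D R M" and D_s_sub: "submodule (D \<inter> mod_colon M {\<zero>\<^bsub>M\<^esub>} {s}) R M"
    unfolding D_s unfolding D_def using insert.prems(1)
    by (auto intro!: submodule_Int T mod_colon_submodule zero_submodule)
  have DT: "D \<subseteq> T" by (simp add: D_def)
  have "S (subquot M (D \<inter> mod_colon M {\<zero>\<^bsub>M\<^esub>} {s}) D)"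
    using serre_subquot_smult_kernel[OF M S K SK D s] DT insert.prems(2) by (auto simp: mod_colon_def)
  moreover have "S (subquot M D T)"
  proof -
    have "T \<subseteq> mod_colon M K F"
      using insert.prems(2) mod_colon_antimono[of F "insert s F" M K] by blast
    then show ?thesis using insert.IH F by (simp add: D_def)
  qed
  ultimately have "ext_cat R S S (subquot M (D \<inter> mod_colon M {\<zero>\<^bsub>M\<^esub>} {s}) T)"
    using subquot_ext_cat[OF M D_s_sub D T _ DT] by blast
  then show ?case using S unfolding D_s serre_def closed_ext_def by simp
qed

lemma ideal_pow_ideal:
  assumes R: "cring R" and a: "ideal a R"
  shows "ideal (ideal_pow R a n) R"
proof -
  interpret cring R by fact
  show ?thesis
  proof (induction n)
    case 0
    then show ?case by (simp add: ideal_pow_def oneideal)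
  next
    case (Suc n)
    then show ?case using ideal_prod_is_ideal[OF a] by (simp add: ideal_pow_def)
  qed
qed

lemma torsion_subquot:
  fixes M :: "('r, 'm) module"
  assumes M: "module R M" and a: "ideal a R" and K: "submodule K R M"
    and "torsion R a M = carrier M"
  shows "torsion R a (subquot M K (carrier M)) = carrier (subquot M K (carrier M))"
proof -
  interpret module R M by fact
  have pow_carr: "ideal_pow R a n \<subseteq> carrier R" for n
    using ideal.Icarr[OF ideal_pow_ideal[OF R.is_cring a]] by blast
  have "coset_rep M K x \<in> torsion R a (subquot M K (carrier M))" if "x \<in> carrier M" for x
  proof -
    have "x \<in> torsion R a M" using that assms(4) by simp
    then obtain n where n: "\<forall>r \<in> ideal_pow R a n. r \<odot>\<^bsub>M\<^esub> x = \<zero>\<^bsub>M\<^esub>"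
      unfolding torsion_def by blast
    then have "\<forall>r \<in> ideal_pow R a n. r \<odot>\<^bsub>subquot M K (carrier M)\<^esub> coset_rep M K x = \<zero>\<^bsub>subquot M K (carrier M)\<^esub>"
      using that pow_carr[of n] by (auto simp: subquot_simps coset_rep_smult[OF K] coset_rep_zero[OF K])
    then show ?thesis using that unfolding torsion_def by (auto simp: subquot_simps)
  qed
  then show ?thesis by (auto simp: torsion_def subquot_simps)
qed

lemma annih_sub_subquot:
  fixes M :: "('r, 'm) module"
  assumes M: "module R M" and K: "submodule K R M" and a: "a \<subseteq> carrier R"
  shows "annih_sub R a (subquot M K (carrier M)) = subquot M K (mod_colon M K a)"
proof -
  interpret module R M by fact
  have rep_annihilated: "(\<forall>r\<in>a. coset_rep M K (r \<odot>\<^bsub>M\<^esub> coset_rep M K x) = \<zero>\<^bsub>M\<^esub>) \<longleftrightarrow> x \<in> mod_colon M K a"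
    if "x \<in> carrier M" for x
    using that a by (auto simp: mod_colon_def coset_rep_smult[OF K] coset_rep_eq_zero_iff[OF K] subsetD)
  have "{y \<in> coset_rep M K ` carrier M. \<forall>r\<in>a. coset_rep M K (r \<odot>\<^bsub>M\<^esub> y) = \<zero>\<^bsub>M\<^esub>} = coset_rep M K ` mod_colon M K a"
    using rep_annihilated by (auto simp: mod_colon_def image_iff)
  then show ?thesis by (simp add: annih_sub_def subquot_def)
qed

lemma ext_cat_subquot_mod_colon:
  fixes M :: "('r, 'm) module"
  assumes "noetherian_ring R" and a: "ideal a R" and M: "module R M" and "serre R S"
    and K: "submodule K R M" and K_annih: "K \<subseteq> mod_colon M {\<zero>\<^bsub>M\<^esub>} a"
    and "S (M\<lparr>carrier := K\<rparr>)" and "T (subquot M K (mod_colon M {\<zero>\<^bsub>M\<^esub>} a))"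
  shows "ext_cat R T S (subquot M K (mod_colon M K a))"
proof -
  interpret module R M by fact
  txt \<open>The only use of noetherianity: \<open>a\<close> is finitely generated.\<close>
  obtain G where G: "G \<subseteq> carrier R" "finite G" "a = Idl\<^bsub>R\<^esub> G"
    using noetherian_ring.finetely_gen[OF assms(1) a] by blast
  have a_carr: "a \<subseteq> carrier R" using ideal.Icarr[OF a] by blast
  let ?C = "mod_colon M {\<zero>\<^bsub>M\<^esub>} a" and ?T = "mod_colon M K a"
  have C_sub: "submodule ?C R M" and T_sub: "submodule ?T R M"
    using mod_colon_submodule[OF zero_submodule a_carr] mod_colon_submodule[OF K a_carr] .
  have CT: "?C \<subseteq> ?T" using submodule_zero_closed[OF K] by (auto simp: mod_colon_def)
  have "?C = ?T \<inter> mod_colon M {\<zero>\<^bsub>M\<^esub>} G"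
    using CT mod_colon_zero_genideal[OF G(1)] G(3) by auto
  moreover have "?T \<subseteq> mod_colon M K G"
    using mod_colon_antimono[OF R.genideal_self[OF G(1)]] G(3) by simp
  ultimately have "S (subquot M ?C ?T)"
    using serre_subquot_mod_colon[OF M \<open>serre R S\<close> K \<open>S (M\<lparr>carrier := K\<rparr>)\<close> T_sub G(2,1)] by simp
  then show ?thesis using subquot_ext_cat[OF M K C_sub T_sub K_annih CT] assms(8) by blast
qed

lemma annih_sub_ext_catE:
  fixes M :: "('r, 'm) module"
  assumes M: "module R M" and a: "a \<subseteq> carrier R" and "ext_cat R S T (annih_sub R a M)"
    and "iso_closed R S" and "iso_closed R T"
  obtains K where "submodule K R M" and "K \<subseteq> mod_colon M {\<zero>\<^bsub>M\<^esub>} a"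
    and "S (M\<lparr>carrier := K\<rparr>)" and "T (subquot M K (mod_colon M {\<zero>\<^bsub>M\<^esub>} a))"
proof -
  interpret module R M by fact
  let ?C = "mod_colon M {\<zero>\<^bsub>M\<^esub>} a"
  have C: "submodule ?C R M" using mod_colon_submodule[OF zero_submodule a] .
  have C_mod: "module R (M\<lparr>carrier := ?C\<rparr>)" using submodule.submodule_is_module[OF C M] .
  obtain K where K_sub: "submodule K R (M\<lparr>carrier := ?C\<rparr>)"
    and "S (M\<lparr>carrier := ?C\<rparr>\<lparr>carrier := K\<rparr>)"
    and "T (subquot (M\<lparr>carrier := ?C\<rparr>) K (carrier (M\<lparr>carrier := ?C\<rparr>)))"
    by (rule ext_cat_subquotE[OF assms(3)[unfolded annih_sub_eq_mod_colon] assms(4,5)])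
  then have "S (M\<lparr>carrier := K\<rparr>)" and "T (subquot M K ?C)"
    by (simp_all add: subquot_carrier_update)
  moreover have K_C: "K \<subseteq> ?C" using module.submoduleE(1)[OF C_mod K_sub] by simp
  moreover have "submodule K R M"
    using module_incl_imp_submodule submodule.submodule_is_module[OF K_sub C_mod]
      K_C submoduleE(1)[OF C] by auto
  ultimately show ?thesis using that by blast
qed

lemma S_sub_ext_cat_swap:
  fixes M :: "('r, 'm) module"
  assumes "noetherian_ring R" and a: "ideal a R" and S1: "serre R S1"
    and "iso_closed R S2" and S2_zero: "contains_zero R S2"
    and S12_ext: "closed_ext R (ext_cat R S1 S2)" and "closed_quot R (S_sub R a (ext_cat R S2 S1))"
    and M_in: "S_sub R a (ext_cat R S2 S1) M"
  shows "S_sub R a (ext_cat R S1 S2) M"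
  unfolding S_sub_def cond_C_def
proof (intro conjI impI)
  show M: "module R M" using M_in by (simp add: S_sub_def)
  interpret module R M by fact
  assume "torsion R a M = carrier M \<and> ext_cat R S1 S2 (annih_sub R a M)"
  then have tors: "torsion R a M = carrier M" and annih: "ext_cat R S1 S2 (annih_sub R a M)" by auto
  have a_carr: "a \<subseteq> carrier R" using ideal.Icarr[OF a] by blast
  obtain K where K: "submodule K R M" and K_C: "K \<subseteq> mod_colon M {\<zero>\<^bsub>M\<^esub>} a"
    and S1K: "S1 (M\<lparr>carrier := K\<rparr>)" and S2K: "S2 (subquot M K (mod_colon M {\<zero>\<^bsub>M\<^esub>} a))"
    using annih_sub_ext_catE[OF M a_carr annih serre_iso_closed[OF S1] \<open>iso_closed R S2\<close>] .
  let ?M' = "subquot M K (carrier M)"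
  have "S_sub R a (ext_cat R S2 S1) ?M'"
    using closed_quotD[OF \<open>closed_quot R (S_sub R a (ext_cat R S2 S1))\<close> M
        subquot_module[OF K carrier_is_submodule submoduleE(1)[OF K]] coset_rep_mod_hom[OF M K] _ M_in]
    by (simp add: subquot_simps)
  moreover have "ext_cat R S2 S1 (annih_sub R a ?M')"
    using annih_sub_subquot[OF M K a_carr]
      ext_cat_subquot_mod_colon[where S = S1 and T = S2, OF assms(1) a M S1 K K_C S1K S2K] by simp
  ultimately have "ext_cat R S2 S1 ?M'"
    using torsion_subquot[OF M a K tors] by (simp add: S_sub_def cond_C_def)
  then have "ext_cat R S1 S2 ?M'"
    using ext_cat_swap[OF S12_ext serre_contains_zero[OF S1 S1K] S2_zero] by blast
  then have "ext_cat R (ext_cat R S1 S2) (ext_cat R S1 S2) M"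
    using ext_cat_subquotI[where S = "ext_cat R S1 S2" and T = "ext_cat R S1 S2", OF M K
        ext_cat_leftI[where S = S1, OF S2_zero submodule.submodule_is_module[OF K M] S1K]] by blast
  then show "ext_cat R S1 S2 M" using S12_ext by (simp add: closed_ext_def)
qed

theorem proposition3p3:
  fixes R :: "'r ring" and a :: "'r set"
    and S1 S2 :: "('r, 'm) modclass"
  assumes "cring R" and "noetherian_ring R" and "ideal a R"
    and "serre R S1"
    and "subcat R S2" and "iso_closed R S2" and "contains_zero R S2"
    and "closed_ext R (ext_cat R S1 S2)"
    and "closed_quot R (S_sub R a (ext_cat R S2 S1))"
  shows "(\<forall>M. S_sub R a (ext_cat R S2 S1) M \<longrightarrow> S_sub R a (ext_cat R S1 S2) M)
     \<and> (satisfies_C R a (ext_cat R S2 S1) \<longrightarrow> satisfies_C R a (ext_cat R S1 S2))"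
proof -
  have swap: "S_sub R a (ext_cat R S2 S1) M \<Longrightarrow> S_sub R a (ext_cat R S1 S2) M" for M
    using S_sub_ext_cat_swap assms(2-4,6-9) by blast
  then show ?thesis by (auto simp: satisfies_C_def S_sub_def)
qed

end
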